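(* Let $k\geq 2$ be an integer and $G=BS(1,k)=\langle a,t\mid tat^{-1}=a^k\rangle$. With respect to the generating set $\{a,t\}$, the conjugacy growth rate of $G$ equals the standard growth rate of $G$.
   Context: For $g\in G$, $|g|$ is the word length with respect to $\{a,t\}$; the length of a conjugacy class $[g]$ is $|[g]|=\min\{|h|: h\sim g\}$. Let $s(n)$ be the number of elements of $G$ of length $n$ and $c(n)$ the number of conjugacy classes of length $n$. The standard growth rate is $\limsup_n s(n)^{1/n}$ (equivalently the reciprocal of the radius of convergence of $\sum s(n)z^n$), and the conjugacy growth rate is $\limsup_n c(n)^{1/n}$ (the reciprocal of the radius of convergence of $\sum c(n)z^n$). *)

theory Defs
  imports Complex_Main "HOL-Library.Liminf_Limsup" "HOL-Library.Extended_Real"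
begin

text \<open>The Baumslag--Solitar group BS(1,k) = < a, t | t a t^-1 = a^k >, realised
  literally as its presentation: words over the symmetric generating set
  {a, a^-1, t, t^-1} modulo the congruence generated by free cancellation and
  the relator t a t^-1 a^-k.\<close>

datatype gen = GA | GT

type_synonym letter = "gen \<times> bool"   \<comment> \<open>(x, True) is the inverse letter x^-1\<close>
type_synonym word = "letter list"

definition inv_letter :: "letter \<Rightarrow> letter" where
  "inv_letter l = (fst l, \<not> snd l)"

definition winv :: "word \<Rightarrow> word" where
  "winv w = rev (map inv_letter w)"

definition bs_relator :: "nat \<Rightarrow> word" where
  "bs_relator k = [(GT, False), (GA, False), (GT, True)] @ replicate k (GA, True)"

inductive bs_step :: "nat \<Rightarrow> word \<Rightarrow> word \<Rightarrow> bool" for k where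
  cancel: "bs_step k (u @ [x, inv_letter x] @ v) (u @ v)"
| relator: "bs_step k (u @ bs_relator k @ v) (u @ v)"

definition bs_eq :: "nat \<Rightarrow> word \<Rightarrow> word \<Rightarrow> bool" where
  "bs_eq k = equivclp (bs_step k)"

definition bs_elem :: "nat \<Rightarrow> word \<Rightarrow> word set" where
  "bs_elem k w = {v. bs_eq k w v}"

definition bs_elements :: "nat \<Rightarrow> word set set" where
  "bs_elements k = range (bs_elem k)"

definition bs_conj_class :: "nat \<Rightarrow> word \<Rightarrow> word set" where
  "bs_conj_class k w = {v. \<exists>u. bs_eq k (u @ w @ winv u) v}"

definition bs_conj_classes :: "nat \<Rightarrow> word set set" where
  "bs_conj_classes k = range (bs_conj_class k)"

text \<open>Length of a set of words: the minimal length of a word in it.  For an element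
  this is the word length |g| w.r.t. {a,t}; for a conjugacy class it is
  min { |h| : h ~ g }.\<close>
definition min_len :: "word set \<Rightarrow> nat" where
  "min_len S = (LEAST n. \<exists>w\<in>S. length w = n)"

definition sphere_count :: "nat \<Rightarrow> nat \<Rightarrow> nat" where
  "sphere_count k n = card {g \<in> bs_elements k. min_len g = n}"

definition conj_count :: "nat \<Rightarrow> nat \<Rightarrow> nat" where
  "conj_count k n = card {C \<in> bs_conj_classes k. min_len C = n}"

definition growth_rate :: "(nat \<Rightarrow> nat) \<Rightarrow> ereal" where
  "growth_rate f = limsup (\<lambda>n. ereal (root n (real (f n))))"

end

theory Submission
  imports Defs "HOL-Real_Asymp.Real_Asymp"
begin

(*
  Realise BS(1,k) faithfully as the group of affine maps x \<mapsto> k^m x + b of the reals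
  generated by a = x + 1 and t = k x; its elements are the pairs (b, m) with b in Z[1/k].

  Every conjugacy class of length n contains an element of length n, so c(n) \<le> s(n).

  Conversely, reading a word w of length n from the left and recording, for every height h
  (the t-exponent of the prefix read so far), the exponent sum d_h of the letters a^(+-1)
  met at that height, the element of w is (k^lo X, m) where lo is the lowest height,
  m the t-exponent of w and X = \<Sum>j d_(lo+j) k^j.  The word a^(d_lo) t ... a^(d_hi) t has
  length at most n + 1 and represents (X, D + 1) with D = hi - lo.  If two such words are
  conjugate then X \<equiv> k^j X' modulo k^(D+1) - 1 for some j \<le> D, and |X| \<le> n k^D, so
  each conjugacy class of length at most n + 1 arises from only polynomially many triples
  (lo, m, X).  Hence s(n) \<le> poly(n) \<Sum>(j \<le> n+1) c(j); since c(n) \<ge> 1, summing and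
  multiplying by a polynomial does not change the exponential growth rate.
*)

abbreviation letter_a :: letter where "letter_a \<equiv> (gen.GA, False)"
abbreviation letter_A :: letter where "letter_A \<equiv> (gen.GA, True)"
abbreviation letter_t :: letter where "letter_t \<equiv> (gen.GT, False)"
abbreviation letter_T :: letter where "letter_T \<equiv> (gen.GT, True)"

lemma letter_exhaust: obtains "x = letter_a" | "x = letter_A" | "x = letter_t" | "x = letter_T"
  by (metis (full_types) gen.exhaust prod.exhaust)

lemma winv_Nil [simp]: "winv [] = []"
  and winv_Cons [simp]: "winv (x # u) = winv u @ [inv_letter x]"
  by (simp_all add: winv_def)

lemma winv_winv [simp]: "winv (winv u) = u"
  by (simp add: winv_def inv_letter_def rev_map comp_def)

lemma winv_append [simp]: "winv (u @ v) = winv v @ winv u"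
  by (simp add: winv_def)

lemma bs_eq_refl [simp]: "bs_eq k u u"
  by (simp add: bs_eq_def)

lemma bs_eq_sym [sym]: "bs_eq k u v \<Longrightarrow> bs_eq k v u"
  by (simp add: bs_eq_def equivclp_sym)

lemma bs_eq_trans [trans]: "bs_eq k u v \<Longrightarrow> bs_eq k v w \<Longrightarrow> bs_eq k u w"
  unfolding bs_eq_def by (rule equivclp_trans)

lemma bs_step_context: "bs_step k u v \<Longrightarrow> bs_step k (l @ u @ r) (l @ v @ r)"
  by (induction rule: bs_step.induct)
    (metis append.assoc bs_step.cancel, metis append.assoc bs_step.relator)

lemma bs_eq_context: "bs_eq k u v \<Longrightarrow> bs_eq k (l @ u @ r) (l @ v @ r)"
  unfolding bs_eq_def
  by (induction rule: equivclp_induct)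
    (auto intro: equivclp_trans equivclp_sym r_into_equivclp bs_step_context)

lemma bs_eq_append: "bs_eq k u u' \<Longrightarrow> bs_eq k v v' \<Longrightarrow> bs_eq k (u @ v) (u' @ v')"
  by (metis append_Nil append_Nil2 bs_eq_context bs_eq_trans)

lemma bs_eq_inverse_pair: "bs_eq k (x # inv_letter x # u) u"
  using bs_step.cancel[of k "[]" x u] by (simp add: bs_eq_def r_into_equivclp)

lemma bs_eq_T_t: "bs_eq k (letter_T # letter_t # u) u"
  and bs_eq_t_T: "bs_eq k (letter_t # letter_T # u) u"
  using bs_eq_inverse_pair[of k letter_T u] bs_eq_inverse_pair[of k letter_t u]
  by (simp_all add: inv_letter_def)

lemma bs_eq_append_winv: "bs_eq k (u @ winv u) []"
proof (induction u)
  case (Cons x u)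
  have "bs_eq k ((x # u) @ winv (x # u)) ([x] @ [] @ [inv_letter x])"
    using bs_eq_context[OF Cons.IH, where l = "[x]" and r = "[inv_letter x]"] by simp
  then show ?case using bs_eq_inverse_pair[of k x "[]"] by (simp add: bs_eq_trans)
qed simp

lemma bs_eq_winv_append: "bs_eq k (winv u @ u) []"
  using bs_eq_append_winv[of k "winv u"] by simp

lemma bs_eq_winv:
  assumes "bs_eq k u v"
  shows "bs_eq k (winv u) (winv v)"
proof -
  have "bs_eq k (winv u) (winv u @ v @ winv v)"
    using bs_eq_append[OF bs_eq_refl bs_eq_append_winv, of k "winv u" v] by (simp add: bs_eq_sym)
  also have "bs_eq k \<dots> (winv u @ u @ winv v)"
    using bs_eq_context[OF bs_eq_sym[OF assms]] by blast
  also have "bs_eq k \<dots> (winv v)"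
    using bs_eq_context[OF bs_eq_winv_append[of k u], where l = "[]" and r = "winv v"] by simp
  finally show ?thesis .
qed

definition apow :: "int \<Rightarrow> word" where
  "apow p = (if 0 \<le> p then replicate (nat p) letter_a else replicate (nat (- p)) letter_A)"

lemma length_apow [simp]: "length (apow p) = nat \<bar>p\<bar>"
  by (simp add: apow_def)

lemma apow_of_nat [simp]: "apow (int n) = replicate n letter_a"
  by (simp add: apow_def)

lemma winv_apow: "winv (apow p) = apow (- p)"
  by (auto simp: apow_def winv_def inv_letter_def)

lemma apow_succ: "0 \<le> p \<Longrightarrow> apow (p + 1) = letter_a # apow p"
  by (simp add: apow_def nat_add_distrib)

lemma apow_pred:
  assumes "p \<le> 0"
  shows "apow (p - 1) = letter_A # apow p"
proof -
  have "nat (1 - p) = Suc (nat (- p))"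
    using assms by arith
  then show ?thesis
    using assms by (simp add: apow_def)
qed

lemma bs_eq_Cons_apow:
  "bs_eq k (letter_a # apow p) (apow (p + 1))"
  "bs_eq k (letter_A # apow p) (apow (p - 1))"
proof -
  show "bs_eq k (letter_a # apow p) (apow (p + 1))"
  proof (cases "0 \<le> p")
    case False
    then show ?thesis
      using bs_eq_inverse_pair[of k letter_a "apow (p + 1)"] apow_pred[of "p + 1"]
      by (simp add: inv_letter_def)
  qed (simp add: apow_succ)
  show "bs_eq k (letter_A # apow p) (apow (p - 1))"
  proof (cases "p \<le> 0")
    case False
    then show ?thesis
      using bs_eq_inverse_pair[of k letter_A "apow (p - 1)"] apow_succ[of "p - 1"]
      by (simp add: inv_letter_def)
  qed (simp add: apow_pred)
qed

lemma bs_eq_apow_add: "bs_eq k (apow p @ apow q) (apow (p + q))"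
proof (induction p rule: int_induct[where k = 0])
  case base
  then show ?case by (simp add: apow_def)
next
  case (step1 i)
  then have "bs_eq k (apow (i + 1) @ apow q) (letter_a # apow (i + q))"
    using bs_eq_context[OF step1.IH, where l = "[letter_a]" and r = "[]"] by (simp add: apow_succ)
  also have "bs_eq k \<dots> (apow (i + 1 + q))"
    using bs_eq_Cons_apow(1)[of k "i + q"] by (simp add: ac_simps)
  finally show ?case .
next
  case (step2 i)
  then have "bs_eq k (apow (i - 1) @ apow q) (letter_A # apow (i + q))"
    using bs_eq_context[OF step2.IH, where l = "[letter_A]" and r = "[]"] by (simp add: apow_pred)
  also have "bs_eq k \<dots> (apow (i - 1 + q))"
    using bs_eq_Cons_apow(2)[of k "i + q"] by (simp add: algebra_simps)
  finally show ?case .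
qed

lemma bs_eq_t_a_T: "bs_eq k [letter_t, letter_a, letter_T] (apow (int k))"
proof -
  have "bs_eq k [letter_t, letter_a, letter_T] ([letter_t, letter_a, letter_T] @ apow (- int k) @ apow (int k))"
    using bs_eq_context[OF bs_eq_apow_add[of k "- int k" "int k"],
        where l = "[letter_t, letter_a, letter_T]" and r = "[]"]
    by (simp add: apow_def bs_eq_sym)
  also have "\<dots> = [] @ bs_relator k @ apow (int k)"
    by (simp add: bs_relator_def apow_def)
  also have "bs_eq k \<dots> (apow (int k))"
    using bs_step.relator[of k "[]" "apow (int k)"] by (simp add: bs_eq_def r_into_equivclp)
  finally show ?thesis .
qed

lemma bs_eq_t_apow_T: "bs_eq k (letter_t # apow p @ [letter_T]) (apow (int k * p))"
proof -
  have nonneg: "bs_eq k (letter_t # apow (int n) @ [letter_T]) (apow (int k * int n))" for n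
  proof (induction n)
    case 0
    show ?case using bs_eq_t_T[of k "[]"] by (simp add: apow_def)
  next
    case (Suc n)
    have "letter_t # apow (int (Suc n)) @ [letter_T] = letter_t # apow (int n) @ [letter_a, letter_T]"
      by (simp del: of_nat_Suc add: replicate_app_Cons_same)
    also have "bs_eq k \<dots> ((letter_t # apow (int n) @ [letter_T]) @ [letter_t, letter_a, letter_T])"
      using bs_eq_context[OF bs_eq_T_t[of k "[letter_a, letter_T]"],
          where l = "letter_t # apow (int n)" and r = "[]"]
      by (simp add: bs_eq_sym)
    also have "bs_eq k \<dots> (apow (int k * int n) @ apow (int k))"
      by (rule bs_eq_append[OF Suc.IH bs_eq_t_a_T])
    also have "bs_eq k \<dots> (apow (int k * int (Suc n)))"
      using bs_eq_apow_add[of k "int k * int n" "int k"] by (simp add: algebra_simps)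
    finally show ?case .
  qed
  show ?thesis
  proof (cases "0 \<le> p")
    case True
    then show ?thesis using nonneg[of "nat p"] by simp
  next
    case False
    then have "winv (letter_t # apow (- p) @ [letter_T]) = letter_t # apow p @ [letter_T]"
      by (simp add: winv_apow inv_letter_def)
    then show ?thesis
      using bs_eq_winv[OF nonneg[of "nat (- p)"]] False by (simp add: winv_apow)
  qed
qed

lemma bs_eq_t_apow: "bs_eq k (letter_t # apow p) (apow (int k * p) @ [letter_t])"
proof -
  have "bs_eq k (letter_t # apow p) ((letter_t # apow p @ [letter_T]) @ [letter_t])"
    using bs_eq_context[OF bs_eq_T_t[of k "[]"], where l = "letter_t # apow p" and r = "[]"]
    by (simp add: bs_eq_sym)
  also have "bs_eq k \<dots> (apow (int k * p) @ [letter_t])"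
    by (rule bs_eq_append[OF bs_eq_t_apow_T bs_eq_refl])
  finally show ?thesis .
qed

lemma bs_eq_apow_T: "bs_eq k (apow p @ [letter_T]) (letter_T # apow (int k * p))"
proof -
  have "bs_eq k (apow p @ [letter_T]) (letter_T # (letter_t # apow p @ [letter_T]))"
    using bs_eq_T_t[of k "apow p @ [letter_T]"] by (simp add: bs_eq_sym)
  also have "bs_eq k \<dots> (letter_T # apow (int k * p))"
    using bs_eq_context[OF bs_eq_t_apow_T, where l = "[letter_T]" and r = "[]"] by simp
  finally show ?thesis .
qed

lemma bs_eq_apow_Ts:
  "bs_eq k (apow p @ replicate e letter_T) (replicate e letter_T @ apow (int k ^ e * p))"
proof (induction e)
  case (Suc e)
  have "apow p @ replicate (Suc e) letter_T = (apow p @ replicate e letter_T) @ [letter_T]"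
    by (simp add: replicate_app_Cons_same)
  also have "bs_eq k \<dots> (replicate e letter_T @ apow (int k ^ e * p) @ [letter_T])"
    using bs_eq_append[OF Suc.IH bs_eq_refl] by simp
  also have "bs_eq k \<dots> (replicate (Suc e) letter_T @ apow (int k ^ Suc e * p))"
    using bs_eq_context[OF bs_eq_apow_T, where l = "replicate e letter_T" and r = "[]"]
    by (simp add: replicate_app_Cons_same mult.assoc)
  finally show ?case .
qed simp

section \<open>The affine representation\<close>

definition aff_mult :: "nat \<Rightarrow> real \<times> int \<Rightarrow> real \<times> int \<Rightarrow> real \<times> int" where
  "aff_mult k g h = (fst g + real k powi snd g * fst h, snd g + snd h)"

definition aff_inv :: "nat \<Rightarrow> real \<times> int \<Rightarrow> real \<times> int" where
  "aff_inv k g = (- (real k powi (- snd g)) * fst g, - snd g)"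

definition aff_conj :: "nat \<Rightarrow> real \<times> int \<Rightarrow> real \<times> int \<Rightarrow> real \<times> int" where
  "aff_conj k g h = aff_mult k (aff_mult k g h) (aff_inv k g)"

lemma aff_mult_assoc: "k > 0 \<Longrightarrow> aff_mult k (aff_mult k g h) j = aff_mult k g (aff_mult k h j)"
  by (simp add: aff_mult_def power_int_add algebra_simps)

lemma aff_mult_0_left [simp]: "aff_mult k (0, 0) g = g"
  and aff_mult_0_right [simp]: "aff_mult k g (0, 0) = g"
  by (simp_all add: aff_mult_def)

lemma aff_mult_inv_left: "k > 0 \<Longrightarrow> aff_mult k (aff_inv k g) g = (0, 0)"
  by (simp add: aff_mult_def aff_inv_def power_int_minus field_simps)

lemma aff_inv_unique:
  assumes "k > 0" "aff_mult k g h = (0, 0)"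
  shows "h = aff_inv k g"
  using aff_mult_assoc[OF assms(1), of "aff_inv k g" g h] assms by (simp add: aff_mult_inv_left)

lemma snd_aff_conj [simp]: "snd (aff_conj k g h) = snd h"
  by (simp add: aff_conj_def aff_mult_def aff_inv_def)

lemma fst_aff_conj:
  "k > 0 \<Longrightarrow> fst (aff_conj k (z, l) (x, m)) = z + real k powi l * x - real k powi m * z"
  by (simp add: aff_conj_def aff_mult_def aff_inv_def power_int_add power_int_minus field_simps)

fun letter_val :: "letter \<Rightarrow> real \<times> int" where
  "letter_val (gen.GA, b) = (if b then -1 else 1, 0)"
| "letter_val (gen.GT, b) = (0, if b then -1 else 1)"

primrec bs_val :: "nat \<Rightarrow> word \<Rightarrow> real \<times> int" where
  "bs_val k [] = (0, 0)"
| "bs_val k (x # w) = aff_mult k (letter_val x) (bs_val k w)"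

lemma bs_val_append: "k > 0 \<Longrightarrow> bs_val k (u @ v) = aff_mult k (bs_val k u) (bs_val k v)"
  by (induction u) (simp_all add: aff_mult_assoc)

lemma bs_val_replicate_a: "bs_val k (replicate n (gen.GA, b)) = (if b then - real n else real n, 0)"
  by (induction n) (auto simp: aff_mult_def)

lemma bs_val_replicate_t: "bs_val k (replicate n (gen.GT, b)) = (0, if b then - int n else int n)"
  by (induction n) (auto simp: aff_mult_def)

lemma bs_val_apow: "bs_val k (apow p) = (of_int p, 0)"
  by (simp add: apow_def bs_val_replicate_a)

lemma bs_val_inverse_pair: "k > 0 \<Longrightarrow> bs_val k [x, inv_letter x] = (0, 0)"
  by (cases x rule: letter_val.cases) (simp_all add: inv_letter_def aff_mult_def)

lemma bs_val_relator:
  assumes "k > 0"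
  shows "bs_val k (bs_relator k) = (0, 0)"
  using assms bs_val_replicate_a[of k k True]
  by (simp add: bs_relator_def bs_val_append aff_mult_def power_int_minus)

lemma bs_val_step: "bs_step k u v \<Longrightarrow> k > 0 \<Longrightarrow> bs_val k u = bs_val k v"
proof (induction rule: bs_step.induct)
  case (cancel u x v)
  then show ?case using bs_val_inverse_pair[of k x] by (simp add: bs_val_append flip: aff_mult_assoc)
next
  case (relator u v)
  then show ?case by (simp add: bs_val_append bs_val_relator)
qed

lemma bs_val_eq: "bs_eq k u v \<Longrightarrow> k > 0 \<Longrightarrow> bs_val k u = bs_val k v"
  unfolding bs_eq_def by (induction rule: equivclp_induct) (auto dest: bs_val_step)

lemma bs_val_winv: "k > 0 \<Longrightarrow> bs_val k (winv u) = aff_inv k (bs_val k u)"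
  using bs_val_eq[OF bs_eq_append_winv[of k u]] by (simp add: bs_val_append aff_inv_unique)

lemma abs_snd_bs_val: "\<bar>snd (bs_val k w)\<bar> \<le> int (length w)"
proof (induction w)
  case (Cons x w)
  then show ?case by (cases x rule: letter_exhaust) (auto simp: aff_mult_def)
qed simp

section \<open>Normal forms and faithfulness\<close>

definition bs_nf :: "nat \<Rightarrow> int \<Rightarrow> nat \<Rightarrow> word" where
  "bs_nf e p f = replicate e letter_T @ apow p @ replicate f letter_t"

lemma bs_val_nf:
  assumes "k > 0"
  shows "bs_val k (bs_nf e p f) = (of_int p / real k ^ e, int f - int e)"
  using assms
  by (simp add: bs_nf_def bs_val_append bs_val_apow bs_val_replicate_t aff_mult_def power_int_minus
      divide_inverse)

lemma bs_eq_nf_lift: "bs_eq k (bs_nf e p f) (bs_nf (e + d) (int k ^ d * p) (f + d))"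
proof (induction d)
  case (Suc d)
  let ?p = "int k ^ d * p"
  have "bs_eq k (bs_nf (e + d) ?p (f + d))
      (replicate (e + d) letter_T @ (letter_T # letter_t # apow ?p) @ replicate (f + d) letter_t)"
    using bs_eq_context[OF bs_eq_T_t[of k "apow ?p"]] by (simp add: bs_nf_def bs_eq_sym)
  also have "bs_eq k \<dots> (replicate (Suc (e + d)) letter_T @ (apow (int k * ?p) @ [letter_t])
      @ replicate (f + d) letter_t)"
    using bs_eq_context[OF bs_eq_t_apow, where l = "replicate (Suc (e + d)) letter_T"]
    by (simp add: replicate_app_Cons_same)
  also have "\<dots> = bs_nf (e + Suc d) (int k ^ Suc d * p) (f + Suc d)"
    by (simp add: bs_nf_def mult.assoc)
  finally show ?case using Suc.IH bs_eq_trans by blast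
qed simp

lemma bs_eq_apow_nf: "bs_eq k (apow q @ bs_nf e p f) (bs_nf e (int k ^ e * q + p) f)"
proof -
  have "bs_eq k (apow q @ bs_nf e p f)
      ((replicate e letter_T @ apow (int k ^ e * q)) @ apow p @ replicate f letter_t)"
    using bs_eq_append[OF bs_eq_apow_Ts bs_eq_refl, of k q e "apow p @ replicate f letter_t"]
    by (simp add: bs_nf_def)
  also have "bs_eq k \<dots> (bs_nf e (int k ^ e * q + p) f)"
    using bs_eq_context[OF bs_eq_apow_add, where l = "replicate e letter_T" and r = "replicate f letter_t"]
    by (simp add: bs_nf_def)
  finally show ?thesis .
qed

lemma bs_eq_Cons_nf: "\<exists>e' p' f'. bs_eq k (x # bs_nf e p f) (bs_nf e' p' f')"
proof (cases x rule: letter_exhaust)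
  case 1
  then have "bs_eq k (x # bs_nf e p f) (bs_nf e (int k ^ e * 1 + p) f)"
    using bs_eq_apow_nf[of k 1 e p f] by (simp add: apow_def)
  then show ?thesis by blast
next
  case 2
  then have "bs_eq k (x # bs_nf e p f) (bs_nf e (int k ^ e * (- 1) + p) f)"
    using bs_eq_apow_nf[of k "- 1" e p f] by (simp add: apow_def)
  then show ?thesis by blast
next
  case 3
  show ?thesis
  proof (cases e)
    case 0
    then have "bs_eq k (x # bs_nf e p f) (bs_nf 0 (int k * p) (Suc f))"
      using bs_eq_append[OF bs_eq_t_apow bs_eq_refl, of k p "replicate f letter_t"] 3
      by (simp add: bs_nf_def)
    then show ?thesis by blast
  next
    case (Suc e')
    then have "bs_eq k (x # bs_nf e p f) (bs_nf e' p f)"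
      using 3 bs_eq_t_T by (simp add: bs_nf_def)
    then show ?thesis by blast
  qed
next
  case 4
  then have "x # bs_nf e p f = bs_nf (Suc e) p f"
    by (simp add: bs_nf_def)
  then show ?thesis by (metis bs_eq_refl)
qed

lemma bs_eq_nf_exists: "\<exists>e p f. bs_eq k w (bs_nf e p f)"
proof (induction w)
  case Nil
  have "bs_nf 0 0 0 = []" by (simp add: bs_nf_def apow_def)
  then show ?case by (metis bs_eq_refl)
next
  case (Cons x w)
  then obtain e p f where "bs_eq k w (bs_nf e p f)" by blast
  then have "bs_eq k (x # w) (x # bs_nf e p f)"
    using bs_eq_context[where l = "[x]" and r = "[]"] by simp
  then show ?case using bs_eq_Cons_nf bs_eq_trans by meson
qed

theorem bs_eq_iff_bs_val:
  assumes "k > 0"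
  shows "bs_eq k u v \<longleftrightarrow> bs_val k u = bs_val k v"
proof
  assume val: "bs_val k u = bs_val k v"
  obtain e1 p1 f1 where u: "bs_eq k u (bs_nf e1 p1 f1)" using bs_eq_nf_exists by blast
  obtain e2 p2 f2 where v: "bs_eq k v (bs_nf e2 p2 f2)" using bs_eq_nf_exists by blast
  have "(of_int p1 / real k ^ e1, int f1 - int e1) = (of_int p2 / real k ^ e2, int f2 - int e2)"
    using val bs_val_eq[OF u assms] bs_val_eq[OF v assms] by (simp add: bs_val_nf[OF assms])
  then have "real_of_int (int k ^ e2 * p1) = real_of_int (int k ^ e1 * p2)"
    and f: "f1 + e2 = f2 + e1"
    using assms by (auto simp: field_simps)
  then have p: "int k ^ e2 * p1 = int k ^ e1 * p2"
    by (simp only: of_int_eq_iff)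
  have "bs_eq k u (bs_nf (e1 + e2) (int k ^ e2 * p1) (f1 + e2))"
    using u bs_eq_nf_lift bs_eq_trans by blast
  moreover have "bs_eq k v (bs_nf (e2 + e1) (int k ^ e1 * p2) (f2 + e1))"
    using v bs_eq_nf_lift bs_eq_trans by blast
  ultimately show "bs_eq k u v"
    using p f by (metis add.commute bs_eq_sym bs_eq_trans)
qed (use bs_val_eq assms in blast)

lemma bs_val_exists_nf: "k > 0 \<Longrightarrow> \<exists>p e m. bs_val k u = (of_int p / real k ^ e, m)"
  using bs_eq_nf_exists[of k u] bs_val_eq bs_val_nf by metis

lemma bs_elem_self: "w \<in> bs_elem k w"
  by (simp add: bs_elem_def)

lemma bs_elem_eq: "v \<in> bs_elem k w \<Longrightarrow> bs_elem k v = bs_elem k w"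
  by (auto simp: bs_elem_def intro: bs_eq_trans bs_eq_sym)

lemma bs_conj_class_self: "w \<in> bs_conj_class k w"
  using bs_eq_refl[of k w] by (auto simp: bs_conj_class_def intro!: exI[of _ "[]"])

lemma bs_conj_class_cong:
  assumes "bs_eq k w w'"
  shows "bs_conj_class k w = bs_conj_class k w'"
proof -
  have "bs_eq k (u @ w @ winv u) v \<longleftrightarrow> bs_eq k (u @ w' @ winv u) v" for u v
    using bs_eq_context[OF assms, where l = u and r = "winv u"] bs_eq_sym bs_eq_trans by metis
  then show ?thesis by (simp add: bs_conj_class_def)
qed

lemma bs_elem_subset_conj_class: "bs_elem k w \<subseteq> bs_conj_class k w"
  by (auto simp: bs_elem_def bs_conj_class_def intro!: exI[of _ "[]"])

lemma bs_conj_class_eq: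
  assumes "v \<in> bs_conj_class k w"
  shows "bs_conj_class k v = bs_conj_class k w"
proof -
  obtain u where u: "bs_eq k (u @ w @ winv u) v"
    using assms by (auto simp: bs_conj_class_def)
  have "bs_eq k (winv u @ v @ u) (winv u @ (u @ w @ winv u) @ u)"
    using bs_eq_context[OF bs_eq_sym[OF u]] by blast
  also have "bs_eq k \<dots> ([] @ w @ [])"
    using bs_eq_append[OF bs_eq_winv_append[of k u]
        bs_eq_append[OF bs_eq_refl[of k w] bs_eq_winv_append[of k u]]] by simp
  finally have w: "bs_eq k ((winv u) @ v @ winv (winv u)) w" by simp
  show ?thesis
  proof (intro equalityI subsetI)
    fix x assume "x \<in> bs_conj_class k v"
    then obtain u' where "bs_eq k (u' @ v @ winv u') x" by (auto simp: bs_conj_class_def)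
    then have "bs_eq k ((u' @ u) @ w @ winv (u' @ u)) x"
      using bs_eq_context[OF u, where l = u' and r = "winv u'"] by (simp add: bs_eq_trans)
    then show "x \<in> bs_conj_class k w" unfolding bs_conj_class_def by blast
  next
    fix x assume "x \<in> bs_conj_class k w"
    then obtain u' where "bs_eq k (u' @ w @ winv u') x" by (auto simp: bs_conj_class_def)
    then have "bs_eq k ((u' @ winv u) @ v @ winv (u' @ winv u)) x"
      using bs_eq_context[OF w, where l = u' and r = "winv u'"] by (simp add: bs_eq_trans)
    then show "x \<in> bs_conj_class k v" unfolding bs_conj_class_def by blast
  qed
qed

lemma bs_val_conj_class:
  assumes "v \<in> bs_conj_class k w" "k > 0"
  shows "\<exists>u. bs_val k v = aff_conj k (bs_val k u) (bs_val k w)"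
proof -
  obtain u where "bs_eq k (u @ w @ winv u) v"
    using assms(1) by (auto simp: bs_conj_class_def)
  then have "bs_val k v = bs_val k (u @ w @ winv u)"
    using bs_val_eq assms(2) by metis
  then show ?thesis
    using assms(2) by (auto simp: bs_val_append bs_val_winv aff_conj_def aff_mult_assoc)
qed

lemma min_len_le: "w \<in> S \<Longrightarrow> min_len S \<le> length w"
  unfolding min_len_def by (rule Least_le) blast

lemma min_len_attained: "S \<noteq> {} \<Longrightarrow> \<exists>w\<in>S. length w = min_len S"
  unfolding min_len_def by (rule LeastI_ex) blast

lemma finite_words_length: "finite {w :: word. length w = n}"
proof -
  have "(UNIV :: gen set) = {gen.GA, gen.GT}"
    using gen.exhaust by blast
  then have "finite (UNIV :: gen set)"
    by (metis finite.emptyI finite.insertI)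
  from finite_cartesian_product[OF this finite_UNIV[where 'a = bool]]
  have "finite (UNIV :: letter set)"
    by simp
  then show ?thesis
    using finite_lists_length_eq[of UNIV n] by simp
qed

lemma classes_of_min_len:
  fixes cls :: "word \<Rightarrow> word set"
  assumes self: "\<And>w. w \<in> cls w" and eq: "\<And>v w. v \<in> cls w \<Longrightarrow> cls v = cls w"
  shows "{C \<in> range cls. min_len C = n} = cls ` {w. length w = n \<and> min_len (cls w) = n}"
proof (intro equalityI subsetI)
  fix C assume "C \<in> {C \<in> range cls. min_len C = n}"
  then obtain w0 where C: "C = cls w0" and n: "min_len C = n" by blast
  then obtain w where w: "w \<in> C" "length w = n"
    using min_len_attained self by blast
  then have "cls w = C"
    using C eq by blast
  then show "C \<in> cls ` {w. length w = n \<and> min_len (cls w) = n}"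
    using w n by blast
qed auto

lemma elements_of_min_len:
  "{g \<in> bs_elements k. min_len g = n} = bs_elem k ` {w. length w = n \<and> min_len (bs_elem k w) = n}"
  unfolding bs_elements_def by (rule classes_of_min_len) (fact bs_elem_self, fact bs_elem_eq)

lemma conj_classes_of_min_len:
  "{C \<in> bs_conj_classes k. min_len C = n}
    = bs_conj_class k ` {w. length w = n \<and> min_len (bs_conj_class k w) = n}"
  unfolding bs_conj_classes_def
  by (rule classes_of_min_len) (fact bs_conj_class_self, fact bs_conj_class_eq)

lemma finite_conj_classes_of_min_len: "finite {C \<in> bs_conj_classes k. min_len C = n}"
  unfolding conj_classes_of_min_len
  by (rule finite_imageI, rule rev_finite_subset[OF finite_words_length[of n]]) blast

lemma card_image_le_card_image:
  assumes "finite (g ` A)" and "\<And>x y. x \<in> A \<Longrightarrow> y \<in> A \<Longrightarrow> g x = g y \<Longrightarrow> f x = f y"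
  shows "card (f ` A) \<le> card (g ` A)"
proof -
  have "f x = f (inv_into A g (g x))" if "x \<in> A" for x
    using assms(2)[OF that inv_into_into[of "g x" g A]] f_inv_into_f[of "g x" g A] that by simp
  then have "f ` A = (\<lambda>z. f (inv_into A g z)) ` g ` A"
    unfolding image_image by (rule image_cong[OF refl])
  then show ?thesis
    using card_image_le[OF assms(1)] by simp
qed

lemma conj_count_le_sphere_count: "conj_count k n \<le> sphere_count k n"
proof -
  let ?C = "{w. length w = n \<and> min_len (bs_conj_class k w) = n}"
  let ?E = "{w. length w = n \<and> min_len (bs_elem k w) = n}"
  have fin: "finite ?E"
    by (rule rev_finite_subset[OF finite_words_length[of n]]) blast
  have "?C \<subseteq> ?E"
  proof
    fix w assume "w \<in> ?C"
    then have w: "length w = n" "min_len (bs_conj_class k w) = n" by simp_all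
    obtain v where v: "v \<in> bs_elem k w" "length v = min_len (bs_elem k w)"
      using min_len_attained bs_elem_self by blast
    have "n \<le> min_len (bs_elem k w)"
      using min_len_le[of v "bs_conj_class k w"] bs_elem_subset_conj_class[of k w] v w(2) by auto
    moreover have "min_len (bs_elem k w) \<le> n"
      using min_len_le[OF bs_elem_self[of w k]] w(1) by simp
    ultimately show "w \<in> ?E" using w(1) by simp
  qed
  have "conj_count k n \<le> card (bs_elem k ` ?C)"
    unfolding conj_count_def conj_classes_of_min_len
  proof (rule card_image_le_card_image)
    show "finite (bs_elem k ` ?C)"
      using finite_subset[OF \<open>?C \<subseteq> ?E\<close> fin] by (rule finite_imageI)
    show "bs_conj_class k v = bs_conj_class k w" if "bs_elem k v = bs_elem k w" for v w
      using that bs_elem_self[of v k] by (intro bs_conj_class_cong) (simp add: bs_elem_def bs_eq_sym)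
  qed
  also have "\<dots> \<le> sphere_count k n"
    unfolding sphere_count_def elements_of_min_len
    using \<open>?C \<subseteq> ?E\<close> fin by (intro card_mono finite_imageI image_mono)
  finally show ?thesis .
qed

lemma conj_count_pos:
  assumes "k > 0"
  shows "1 \<le> conj_count k n"
proof -
  let ?C = "bs_conj_class k (replicate n letter_t)"
  have val: "snd (bs_val k (replicate n letter_t)) = int n"
    by (simp add: bs_val_replicate_t)
  have long: "n \<le> length v" if "v \<in> ?C" for v
    using bs_val_conj_class[OF that assms] abs_snd_bs_val[of k v] val by auto
  obtain v where "v \<in> ?C" "length v = min_len ?C"
    using min_len_attained bs_conj_class_self by blast
  then have "n \<le> min_len ?C"
    using long by metis
  moreover have "min_len ?C \<le> n"
    using min_len_le[OF bs_conj_class_self[of "replicate n letter_t" k]] by simp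
  ultimately have "?C \<in> {C \<in> bs_conj_classes k. min_len C = n}"
    by (simp add: bs_conj_classes_def)
  then have "card {C \<in> bs_conj_classes k. min_len C = n} > 0"
    using finite_conj_classes_of_min_len card_gt_0_iff by blast
  then show ?thesis
    by (simp add: conj_count_def)
qed

section \<open>Digits of a word\<close>

definition letter_sign :: "letter \<Rightarrow> int" where
  "letter_sign x = (if snd x then -1 else 1)"

text \<open>The height of a letter of w is the t-exponent of the prefix of w preceding it.
  \<^term>\<open>digit w h\<close> is the exponent sum of the letters a^(+-1) at height h, and all
  heights, including that of the end of the word, lie between
  \<^term>\<open>min_height w\<close> and \<^term>\<open>max_height w\<close>.\<close>

primrec digit :: "word \<Rightarrow> int \<Rightarrow> int" where
  "digit [] h = 0"
| "digit (x # w) h = (if fst x = gen.GA then digit w h + (if h = 0 then letter_sign x else 0)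
                      else digit w (h - letter_sign x))"

primrec min_height :: "word \<Rightarrow> int" where
  "min_height [] = 0"
| "min_height (x # w) = (if fst x = gen.GA then min_height w else min 0 (min_height w + letter_sign x))"

primrec max_height :: "word \<Rightarrow> int" where
  "max_height [] = 0"
| "max_height (x # w) = (if fst x = gen.GA then max_height w else max 0 (max_height w + letter_sign x))"

lemma min_height_le_0: "min_height w \<le> 0"
  by (induction w) auto

lemma max_height_ge_0: "0 \<le> max_height w"
  by (induction w) auto

lemma heights_shift:
  assumes "{min_height (x # w)..max_height (x # w)} \<subseteq> S" "fst x \<noteq> gen.GA"
  shows "{min_height w..max_height w} \<subseteq> (\<lambda>h. h - letter_sign x) ` S"
proof
  fix h assume "h \<in> {min_height w..max_height w}"
  then have "h + letter_sign x \<in> {min_height (x # w)..max_height (x # w)}"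
    using assms(2) by auto
  then have "h + letter_sign x \<in> S"
    using assms(1) by blast
  then show "h \<in> (\<lambda>h. h - letter_sign x) ` S"
    by (rule rev_image_eqI) simp
qed

lemma sum_shift: "(\<Sum>h\<in>S. f (h - s)) = (\<Sum>h\<in>(\<lambda>h. h - s) ` S. f h)" for s :: int
  by (simp add: sum.reindex inj_on_def)

lemma sum_abs_digit_le:
  "finite S \<Longrightarrow> {min_height w..max_height w} \<subseteq> S
    \<Longrightarrow> (\<Sum>h\<in>S. \<bar>digit w h\<bar>) + (max_height w - min_height w) \<le> int (length w)"
proof (induction w arbitrary: S)
  case (Cons x w)
  show ?case
  proof (cases "fst x = gen.GA")
    case True
    have "0 \<in> S"
      using Cons.prems(2) min_height_le_0[of w] max_height_ge_0[of w] True by auto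
    have "(\<Sum>h\<in>S. \<bar>digit (x # w) h\<bar>) \<le> (\<Sum>h\<in>S. \<bar>digit w h\<bar> + (if h = 0 then 1 else 0))"
      using True by (intro sum_mono) (auto simp: letter_sign_def)
    also have "\<dots> = (\<Sum>h\<in>S. \<bar>digit w h\<bar>) + 1"
      using Cons.prems(1) \<open>0 \<in> S\<close> by (simp add: sum.distrib)
    finally show ?thesis
      using Cons.IH[OF Cons.prems(1)] Cons.prems(2) True by simp
  next
    case False
    have "(\<Sum>h\<in>S. \<bar>digit (x # w) h\<bar>) = (\<Sum>h\<in>(\<lambda>h. h - letter_sign x) ` S. \<bar>digit w h\<bar>)"
      using False by (simp add: sum_shift[where f = "\<lambda>h. \<bar>digit w h\<bar>"])
    moreover have "max_height (x # w) - min_height (x # w) \<le> max_height w - min_height w + 1"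
      using False min_height_le_0[of w] max_height_ge_0[of w] by (auto simp: letter_sign_def)
    ultimately show ?thesis
      using Cons.IH[of "(\<lambda>h. h - letter_sign x) ` S"] Cons.prems heights_shift[OF Cons.prems(2) False]
      by simp
  qed
qed simp

lemma fst_bs_val_digits:
  assumes "k > 0"
  shows "finite S \<Longrightarrow> {min_height w..max_height w} \<subseteq> S
    \<Longrightarrow> fst (bs_val k w) = (\<Sum>h\<in>S. of_int (digit w h) * real k powi h)"
proof (induction w arbitrary: S)
  case (Cons x w)
  show ?case
  proof (cases "fst x = gen.GA")
    case True
    have "0 \<in> S"
      using Cons.prems(2) min_height_le_0[of w] max_height_ge_0[of w] True by auto
    have "(\<Sum>h\<in>S. of_int (digit (x # w) h) * real k powi h)
        = (\<Sum>h\<in>S. of_int (digit w h) * real k powi h + (if h = 0 then of_int (letter_sign x) else 0))"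
      using True by (intro sum.cong) (auto simp: distrib_right)
    also have "\<dots> = fst (bs_val k w) + of_int (letter_sign x)"
      using Cons.IH[OF Cons.prems(1)] Cons.prems(2) True Cons.prems(1) \<open>0 \<in> S\<close>
      by (simp add: sum.distrib)
    finally show ?thesis
      using True by (cases x rule: letter_exhaust) (simp_all add: aff_mult_def letter_sign_def)
  next
    case False
    have "(\<Sum>h\<in>S. of_int (digit (x # w) h) * real k powi h)
        = real k powi letter_sign x *
          (\<Sum>h\<in>S. of_int (digit w (h - letter_sign x)) * real k powi (h - letter_sign x))"
      using False assms by (simp add: sum_distrib_left power_int_diff field_simps)
    also have "\<dots> = real k powi letter_sign x * fst (bs_val k w)"
      using Cons.IH[of "(\<lambda>h. h - letter_sign x) ` S"] Cons.prems heights_shift[OF Cons.prems(2) False]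
      by (simp add: sum_shift[where f = "\<lambda>h. of_int (digit w h) * real k powi h"])
    finally show ?thesis
      using False by (cases x rule: letter_exhaust) (simp_all add: aff_mult_def letter_sign_def)
  qed
qed simp

definition width :: "word \<Rightarrow> nat" where
  "width w = nat (max_height w - min_height w)"

definition digit_value :: "nat \<Rightarrow> word \<Rightarrow> int" where
  "digit_value k w = (\<Sum>j\<le>width w. digit w (min_height w + int j) * int k ^ j)"

definition digit_word :: "word \<Rightarrow> word" where
  "digit_word w = concat (map (\<lambda>j. apow (digit w (min_height w + int j)) @ [letter_t]) [0..<Suc (width w)])"

lemma heights_eq_image: "{min_height w..max_height w} = (\<lambda>j. min_height w + int j) ` {..width w}"
proof -
  have "h \<in> (\<lambda>j. min_height w + int j) ` {..width w}" if "h \<in> {min_height w..max_height w}" for h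
    using that by (intro image_eqI[of _ _ "nat (h - min_height w)"]) (auto simp: width_def)
  then show ?thesis
    using min_height_le_0[of w] max_height_ge_0[of w] by (auto simp: width_def)
qed

lemma sum_heights:
  "(\<Sum>h\<in>{min_height w..max_height w}. f h) = (\<Sum>j\<le>width w. f (min_height w + int j))"
  unfolding heights_eq_image by (simp add: sum.reindex inj_on_def)

lemma fst_bs_val_digit_value:
  assumes "k > 0"
  shows "fst (bs_val k w) = real k powi min_height w * of_int (digit_value k w)"
proof -
  have "fst (bs_val k w) = (\<Sum>h\<in>{min_height w..max_height w}. of_int (digit w h) * real k powi h)"
    by (rule fst_bs_val_digits[OF assms]) simp_all
  also have "\<dots> = real k powi min_height w * of_int (digit_value k w)"
    using assms by (simp add: sum_heights digit_value_def sum_distrib_left power_int_add ac_simps)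
  finally show ?thesis .
qed

lemma sum_abs_digit_width:
  "(\<Sum>j\<le>width w. \<bar>digit w (min_height w + int j)\<bar>) + int (width w) \<le> int (length w)"
  using sum_abs_digit_le[of "{min_height w..max_height w}" w] min_height_le_0[of w] max_height_ge_0[of w]
  by (simp add: sum_heights width_def)

lemma width_le_length: "width w \<le> length w"
proof -
  have "0 \<le> (\<Sum>j\<le>width w. \<bar>digit w (min_height w + int j)\<bar>)"
    by (simp add: sum_nonneg)
  then show ?thesis
    using sum_abs_digit_width[of w] by linarith
qed

lemma min_height_ge: "- int (length w) \<le> min_height w"
  using width_le_length[of w] max_height_ge_0[of w] by (simp add: width_def)

lemma bs_val_blocks:
  assumes "k > 0"
  shows "bs_val k (concat (map (\<lambda>j. apow (d j) @ [letter_t]) [0..<n]))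
    = (\<Sum>j<n. of_int (d j) * real k ^ j, int n)"
proof (induction n)
  case (Suc n)
  then show ?case
    using assms by (simp add: bs_val_append bs_val_apow aff_mult_def power_int_of_nat)
qed simp

lemma bs_val_digit_word:
  assumes "k > 0"
  shows "bs_val k (digit_word w) = (of_int (digit_value k w), int (width w) + 1)"
  using bs_val_blocks[OF assms, of _ "Suc (width w)"]
  by (simp add: digit_word_def digit_value_def lessThan_Suc_atMost del: upt_Suc)

lemma length_blocks:
  "length (concat (map (\<lambda>j. apow (d j) @ [letter_t]) [0..<n])) = (\<Sum>j<n. nat \<bar>d j\<bar> + 1)"
  by (induction n) simp_all

lemma length_digit_word: "length (digit_word w) \<le> length w + 1"
proof -
  have "length (digit_word w) = (\<Sum>j\<le>width w. nat \<bar>digit w (min_height w + int j)\<bar> + 1)"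
    using length_blocks[of _ "Suc (width w)"]
    by (simp add: digit_word_def lessThan_Suc_atMost del: upt_Suc sum.atMost_Suc)
  then have "int (length (digit_word w))
      = (\<Sum>j\<le>width w. \<bar>digit w (min_height w + int j)\<bar>) + int (width w) + 1"
    by (simp add: of_nat_sum sum.distrib)
  then show ?thesis
    using sum_abs_digit_width[of w] by linarith
qed

lemma abs_digit_value_le:
  assumes "k > 0"
  shows "\<bar>digit_value k w\<bar> \<le> int (length w) * int k ^ width w"
proof -
  have "\<bar>digit_value k w\<bar> \<le> (\<Sum>j\<le>width w. \<bar>digit w (min_height w + int j)\<bar> * int k ^ width w)"
    unfolding digit_value_def
    by (rule order_trans[OF sum_abs sum_mono])
      (use assms in \<open>auto simp: abs_mult intro!: mult_left_mono power_increasing\<close>)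
  also have "\<dots> \<le> int (length w) * int k ^ width w"
    using sum_abs_digit_width[of w] by (simp add: sum_distrib_right[symmetric] mult_right_mono)
  finally show ?thesis .
qed

section \<open>Counting elements by the conjugacy class of their digit word\<close>

lemma pow_mod_pow_minus_1:
  fixes k :: int
  shows "k ^ a mod (k ^ N - 1) = k ^ (a mod N) mod (k ^ N - 1)"
proof -
  define M where "M = k ^ N - 1"
  have "k ^ N mod M = 1 mod M"
    by (simp add: M_def mod_add_self2[of 1 "k ^ N - 1", simplified])
  then have "(k ^ N) ^ (a div N) mod M = 1 mod M"
    by (metis power_mod power_one)
  moreover have "k ^ a = (k ^ N) ^ (a div N) * k ^ (a mod N)"
    by (metis power_add power_mult div_mult_mod_eq mult.commute)
  ultimately show ?thesis
    unfolding M_def[symmetric] by (metis mod_mult_left_eq mult_1)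
qed

lemma clear_denominators:
  assumes "k > 0" "e \<le> F" "int G = int F + l"
    and X1: "of_int X1 = of_int p / real k ^ e + real k powi l * of_int X0 - real k ^ N * (of_int p / real k ^ e)"
  shows "int k ^ F * X1 = int k ^ G * X0 - (int k ^ N - 1) * (p * int k ^ (F - e))"
proof -
  define K where "K = real k"
  have "K > 0"
    using assms(1) by (simp add: K_def)
  have A: "K ^ F * (of_int p / K ^ e) = of_int p * K ^ (F - e)"
    using \<open>e \<le> F\<close> \<open>K > 0\<close> by (simp add: power_diff)
  have B: "K ^ F * K powi l = K ^ G"
    using \<open>K > 0\<close> \<open>int G = int F + l\<close> by (simp flip: power_int_of_nat power_int_add)
  have "K ^ F * of_int X1
      = K ^ F * (of_int p / K ^ e) + (K ^ F * K powi l) * of_int X0 - K ^ N * (K ^ F * (of_int p / K ^ e))"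
    unfolding X1 K_def by (simp only: ring_distribs mult_ac)
  also have "\<dots> = K ^ G * of_int X0 - (K ^ N - 1) * of_int p * K ^ (F - e)"
    unfolding A B by (simp add: algebra_simps)
  finally have "real_of_int (int k ^ F * X1)
      = real_of_int (int k ^ G * X0 - (int k ^ N - 1) * (p * int k ^ (F - e)))"
    by (simp add: K_def algebra_simps)
  then show ?thesis
    by (simp only: of_int_eq_iff)
qed

lemma conj_int_mod:
  assumes k: "k > 0" and N: "N > 0"
    and conj: "(of_int X1, int N) = aff_conj k (bs_val k u) (of_int X0, int N)"
  shows "\<exists>j<N. X1 mod (int k ^ N - 1) = int k ^ j * X0 mod (int k ^ N - 1)"
proof -
  obtain p e l where u: "bs_val k u = (of_int p / real k ^ e, l)"
    using bs_val_exists_nf[OF k] by blast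
  \<comment> \<open>F is a multiple of N, so that k^F \<equiv> 1 modulo k^N - 1, large enough to clear the
    denominator k^e and the negative powers of k.\<close>
  define F where "F = N * (e + nat \<bar>l\<bar>)"
  define G where "G = nat (int F + l)"
  define M where "M = int k ^ N - 1"
  have "e + nat \<bar>l\<bar> \<le> F"
    using N unfolding F_def by (cases N) simp_all
  then have "e \<le> F" "int G = int F + l"
    unfolding G_def by linarith+
  moreover have "of_int X1 = of_int p / real k ^ e + real k powi l * of_int X0 - real k ^ N * (of_int p / real k ^ e)"
    using fst_aff_conj[OF k] arg_cong[OF conj, of fst] by (simp add: u power_int_of_nat)
  ultimately have "int k ^ F * X1 = int k ^ G * X0 - M * (p * int k ^ (F - e))"
    unfolding M_def by (rule clear_denominators[OF k])
  then have "int k ^ F * X1 mod M = int k ^ G * X0 mod M"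
    by (simp add: mod_diff_right_eq[symmetric])
  moreover have "int k ^ F mod M = 1 mod M"
    using pow_mod_pow_minus_1[of "int k" F N] by (simp add: M_def F_def)
  moreover have "int k ^ G mod M = int k ^ (G mod N) mod M"
    using pow_mod_pow_minus_1 by (simp add: M_def)
  ultimately have "X1 mod M = int k ^ (G mod N) * X0 mod M"
    by (metis mod_mult_left_eq mult_1)
  then show ?thesis
    using N unfolding M_def by (intro exI[of _ "G mod N"]) simp
qed

lemma card_residue_class_le:
  fixes M r :: int
  assumes "M \<ge> 1"
  shows "card {X. \<bar>X\<bar> \<le> int n * M \<and> X mod M = r} \<le> 2 * n + 1"
proof -
  have "{X. \<bar>X\<bar> \<le> int n * M \<and> X mod M = r} \<subseteq> (\<lambda>q. q * M + r) ` {- int n..int n}"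
  proof
    fix X assume X: "X \<in> {X. \<bar>X\<bar> \<le> int n * M \<and> X mod M = r}"
    then have l: "- int n * M \<le> X" and u: "X \<le> int n * M"
      by auto
    have "0 < M"
      using assms by simp
    have "(- int n) * M div M \<le> X div M" "X div M \<le> int n * M div M"
      by (rule zdiv_mono1[OF l \<open>0 < M\<close>], rule zdiv_mono1[OF u \<open>0 < M\<close>])
    moreover have "(- int n) * M div M = - int n" "int n * M div M = int n"
      using \<open>0 < M\<close> by (simp_all only: nonzero_mult_div_cancel_right less_irrefl not_False_eq_True)
    ultimately have "X div M \<in> {- int n..int n}"
      by simp
    moreover have "X = X div M * M + r"
      using X div_mult_mod_eq[of X M] by simp
    ultimately show "X \<in> (\<lambda>q. q * M + r) ` {- int n..int n}"
      by blast
  qed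
  then have "card {X. \<bar>X\<bar> \<le> int n * M \<and> X mod M = r} \<le> card {- int n..int n}"
    by (rule surj_card_le[rotated]) simp
  then show ?thesis by simp
qed

lemma card_bounded_conjugates_le:
  assumes k: "k \<ge> 2"
  shows "card {X. \<bar>X\<bar> \<le> int n * int k ^ D \<and>
      (\<exists>u. (of_int X, int D + 1) = aff_conj k (bs_val k u) (of_int X0, int D + 1))} \<le> (D + 1) * (2 * n + 1)"
    (is "card ?S \<le> _")
proof -
  define M where "M = int k ^ Suc D - 1"
  define R where "R j = {X. \<bar>X\<bar> \<le> int n * M \<and> X mod M = int k ^ j * X0 mod M}" for j
  have "int k ^ D \<le> M"
    using k by (simp add: M_def)
  moreover have "1 \<le> int k ^ D"
    using k by simp
  ultimately have "1 \<le> M" by linarith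
  have "?S \<subseteq> (\<Union>j<Suc D. R j)"
  proof
    fix X assume "X \<in> ?S"
    then obtain u where X: "\<bar>X\<bar> \<le> int n * int k ^ D"
      and conj: "(of_int X, int D + 1) = aff_conj k (bs_val k u) (of_int X0, int D + 1)"
      by auto
    from conj have "(of_int X, int (Suc D)) = aff_conj k (bs_val k u) (of_int X0, int (Suc D))"
      by (simp add: add.commute)
    then have "\<exists>j<Suc D. X mod M = int k ^ j * X0 mod M"
      unfolding M_def using k by (intro conj_int_mod) simp_all
    then obtain j where "j < Suc D" "X mod M = int k ^ j * X0 mod M"
      by blast
    moreover have "\<bar>X\<bar> \<le> int n * M"
      using X \<open>int k ^ D \<le> M\<close> by (meson mult_left_mono of_nat_0_le_iff order_trans)
    ultimately show "X \<in> (\<Union>j<Suc D. R j)"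
      by (auto simp: R_def)
  qed
  moreover have "finite (\<Union>j<Suc D. R j)"
    by (rule finite_subset[of _ "{- (int n * M)..int n * M}"]) (auto simp: R_def)
  ultimately have "card ?S \<le> card (\<Union>j<Suc D. R j)"
    by (rule card_mono[rotated])
  also have "\<dots> \<le> (\<Sum>j<Suc D. card (R j))"
    by (rule card_UN_le) simp
  also have "\<dots> \<le> (\<Sum>j<Suc D. 2 * n + 1)"
    unfolding R_def by (rule sum_mono, rule card_residue_class_le[OF \<open>1 \<le> M\<close>])
  finally show ?thesis by simp
qed

lemma card_digit_values_fixed_width:
  assumes k: "k \<ge> 2"
  shows "card (digit_value k ` {w. length w = n \<and> bs_conj_class k (digit_word w) = C \<and> width w = D})
    \<le> (D + 1) * (2 * n + 1)"
    (is "card (digit_value k ` ?W) \<le> _")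
proof (cases "?W = {}")
  case False
  then obtain w0 where w0: "w0 \<in> ?W" by blast
  let ?S = "{X. \<bar>X\<bar> \<le> int n * int k ^ D \<and>
      (\<exists>u. (of_int X, int D + 1) = aff_conj k (bs_val k u) (of_int (digit_value k w0), int D + 1))}"
  have "digit_value k ` ?W \<subseteq> ?S"
  proof
    fix X assume "X \<in> digit_value k ` ?W"
    then obtain w where w: "w \<in> ?W" and X: "X = digit_value k w" by blast
    then have "digit_word w \<in> bs_conj_class k (digit_word w0)"
      using w0 bs_conj_class_self[of "digit_word w" k] by simp
    then obtain u where "bs_val k (digit_word w) = aff_conj k (bs_val k u) (bs_val k (digit_word w0))"
      using bs_val_conj_class k by fastforce
    then have "(of_int X, int D + 1) = aff_conj k (bs_val k u) (of_int (digit_value k w0), int D + 1)"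
      using w w0 X k by (simp add: bs_val_digit_word)
    moreover have "\<bar>X\<bar> \<le> int n * int k ^ D"
      using abs_digit_value_le[of k w] w X k by simp
    ultimately show "X \<in> ?S" by blast
  qed
  moreover have "finite ?S"
    by (rule finite_subset[of _ "{- (int n * int k ^ D)..int n * int k ^ D}"]) auto
  ultimately have "card (digit_value k ` ?W) \<le> card ?S"
    by (rule card_mono[rotated])
  also have "\<dots> \<le> (D + 1) * (2 * n + 1)"
    by (rule card_bounded_conjugates_le[OF k])
  finally show ?thesis .
qed (metis image_empty card.empty zero_le)

lemma card_digit_values:
  assumes k: "k \<ge> 2"
  shows "card (digit_value k ` {w. length w = n \<and> bs_conj_class k (digit_word w) = C})
    \<le> (n + 1) * ((n + 1) * (2 * n + 1))"
proof -
  let ?W = "\<lambda>D. {w. length w = n \<and> bs_conj_class k (digit_word w) = C \<and> width w = D}"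
  have "{w. length w = n \<and> bs_conj_class k (digit_word w) = C} = (\<Union>D\<le>n. ?W D)"
    using width_le_length by auto
  then have "digit_value k ` {w. length w = n \<and> bs_conj_class k (digit_word w) = C}
      = (\<Union>D\<le>n. digit_value k ` ?W D)"
    by (simp add: image_UN)
  then have "card (digit_value k ` {w. length w = n \<and> bs_conj_class k (digit_word w) = C})
      \<le> (\<Sum>D\<le>n. card (digit_value k ` ?W D))"
    by (simp add: card_UN_le)
  also have "\<dots> \<le> (\<Sum>D\<le>n. (n + 1) * (2 * n + 1))"
  proof (rule sum_mono)
    fix D assume "D \<in> {..n}"
    then have "(D + 1) * (2 * n + 1) \<le> (n + 1) * (2 * n + 1)"
      by (intro mult_le_mono1) simp
    then show "card (digit_value k ` ?W D) \<le> (n + 1) * (2 * n + 1)"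
      using card_digit_values_fixed_width[OF k, of n C D] by linarith
  qed
  finally show ?thesis by simp
qed

lemma card_digit_word_fiber_le:
  assumes k: "k \<ge> 2"
  shows "card (bs_elem k ` {w. length w = n \<and> bs_conj_class k (digit_word w) = C})
    \<le> (n + 1) ^ 3 * (2 * n + 1) ^ 2"
proof -
  let ?W = "{w. length w = n \<and> bs_conj_class k (digit_word w) = C}"
  let ?sig = "\<lambda>w. (min_height w, snd (bs_val k w), digit_value k w)"
  have "?sig w \<in> {- int n..0} \<times> {- int n..int n} \<times> digit_value k ` ?W" if "w \<in> ?W" for w
    using that min_height_ge[of w] min_height_le_0[of w] abs_snd_bs_val[of k w] by auto
  then have "?sig ` ?W \<subseteq> {- int n..0} \<times> {- int n..int n} \<times> digit_value k ` ?W"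
    by blast
  moreover have "finite (digit_value k ` ?W)"
    by (rule finite_imageI, rule rev_finite_subset[OF finite_words_length[of n]]) blast
  ultimately have "card (?sig ` ?W) \<le> card ({- int n..0} \<times> {- int n..int n} \<times> digit_value k ` ?W)"
    by (intro card_mono) simp_all
  also have "\<dots> = (n + 1) * ((2 * n + 1) * card (digit_value k ` ?W))"
    by (simp add: card_cartesian_product nat_add_distrib nat_mult_distrib)
  also have "\<dots> \<le> (n + 1) * ((2 * n + 1) * ((n + 1) * ((n + 1) * (2 * n + 1))))"
    using card_digit_values[OF k, of n C] by (intro mult_le_mono2)
  also have "\<dots> = (n + 1) ^ 3 * (2 * n + 1) ^ 2"
    by (simp only: power2_eq_square power3_eq_cube mult_ac)
  finally have sig: "card (?sig ` ?W) \<le> (n + 1) ^ 3 * (2 * n + 1) ^ 2" .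
  have "card (bs_elem k ` ?W) \<le> card (?sig ` ?W)"
  proof (rule card_image_le_card_image)
    show "finite (?sig ` ?W)"
      by (rule finite_imageI, rule rev_finite_subset[OF finite_words_length[of n]]) blast
    show "bs_elem k v = bs_elem k w" if "?sig v = ?sig w" for v w
    proof -
      have "bs_val k v = bs_val k w"
        using that fst_bs_val_digit_value[of k v] fst_bs_val_digit_value[of k w] k
        by (simp add: prod_eq_iff)
      then show ?thesis
        using k by (simp add: bs_elem_def bs_eq_iff_bs_val)
    qed
  qed
  with sig show ?thesis by linarith
qed

lemma sphere_count_le:
  assumes "k \<ge> 2"
  shows "sphere_count k n \<le> (n + 1) ^ 3 * (2 * n + 1) ^ 2 * (\<Sum>j\<le>Suc n. conj_count k j)"
proof -
  let ?B = "(n + 1) ^ 3 * (2 * n + 1) ^ 2"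
  let ?F = "\<lambda>C. {w. length w = n \<and> bs_conj_class k (digit_word w) = C}"
  let ?Cl = "\<lambda>j. {C \<in> bs_conj_classes k. min_len C = j}"
  have "sphere_count k n \<le> card (bs_elem k ` {w. length w = n})"
    unfolding sphere_count_def elements_of_min_len
    by (intro card_mono finite_imageI finite_words_length image_mono) auto
  also have "bs_elem k ` {w. length w = n} = (\<Union>j\<le>Suc n. \<Union>C\<in>?Cl j. bs_elem k ` ?F C)"
  proof (intro equalityI subsetI)
    fix g assume "g \<in> bs_elem k ` {w. length w = n}"
    then obtain w where w: "length w = n" "g = bs_elem k w" by blast
    let ?C = "bs_conj_class k (digit_word w)"
    have "min_len ?C \<le> Suc n"
      using min_len_le[OF bs_conj_class_self[of "digit_word w" k]] length_digit_word[of w] w(1) by simp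
    moreover have "?C \<in> bs_conj_classes k"
      by (simp add: bs_conj_classes_def)
    ultimately show "g \<in> (\<Union>j\<le>Suc n. \<Union>C\<in>?Cl j. bs_elem k ` ?F C)"
      using w by blast
  qed auto
  also have "card \<dots> \<le> (\<Sum>j\<le>Suc n. card (\<Union>C\<in>?Cl j. bs_elem k ` ?F C))"
    by (rule card_UN_le) simp
  also have "\<dots> \<le> (\<Sum>j\<le>Suc n. \<Sum>C\<in>?Cl j. card (bs_elem k ` ?F C))"
    by (intro sum_mono card_UN_le finite_conj_classes_of_min_len)
  also have "\<dots> \<le> (\<Sum>j\<le>Suc n. \<Sum>C\<in>?Cl j. ?B)"
    by (intro sum_mono card_digit_word_fiber_le[OF assms])
  also have "\<dots> = ?B * (\<Sum>j\<le>Suc n. conj_count k j)"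
    by (simp add: conj_count_def sum_distrib_left mult.commute del: sum.atMost_Suc)
  finally show ?thesis .
qed

section \<open>Growth rates\<close>

lemma growth_rate_mono:
  assumes "\<And>n. a n \<le> b n"
  shows "growth_rate a \<le> growth_rate b"
  unfolding growth_rate_def
proof (intro Limsup_mono always_eventually allI)
  fix n
  show "ereal (root n (real (a n))) \<le> ereal (root n (real (b n)))"
    using assms by (cases "n = 0") (simp_all add: real_root_le_mono)
qed

lemma one_le_growth_rate:
  assumes "\<And>n. 1 \<le> a n"
  shows "1 \<le> growth_rate a"
  unfolding growth_rate_def
proof (rule le_Limsup)
  show "\<forall>\<^sub>F n in sequentially. 1 \<le> ereal (root n (real (a n)))"
    by (rule eventually_mono[OF eventually_gt_at_top[of 0]]) (use assms in simp)
qed simp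

lemma eventually_le_pow_of_growth_rate_less:
  assumes "growth_rate a < ereal r"
  shows "\<forall>\<^sub>F n in sequentially. real (a n) \<le> r ^ n"
  using Limsup_lessD[OF assms[unfolded growth_rate_def]] eventually_gt_at_top[of 0]
proof eventually_elim
  case (elim n)
  then have "root n (real (a n)) ^ n \<le> r ^ n"
    by (intro power_mono) simp_all
  with elim show ?case by simp
qed

lemma growth_rate_le_of_eventually_le:
  assumes le: "\<forall>\<^sub>F n in sequentially. real (b n) \<le> q n * r ^ n"
    and q: "(\<lambda>n. root n (q n)) \<longlonglongrightarrow> 1" and "0 \<le> r"
  shows "growth_rate b \<le> ereal r"
proof -
  have "\<forall>\<^sub>F n in sequentially. ereal (root n (real (b n))) \<le> ereal (root n (q n) * r)"
    using le eventually_gt_at_top[of 0]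
  proof eventually_elim
    case (elim n)
    then have "root n (real (b n)) \<le> root n (q n * r ^ n)"
      by (simp add: real_root_le_iff)
    also have "\<dots> = root n (q n) * r"
      using elim \<open>0 \<le> r\<close> by (simp add: real_root_mult real_root_power_cancel)
    finally show ?case by simp
  qed
  then have "growth_rate b \<le> limsup (\<lambda>n. ereal (root n (q n) * r))"
    unfolding growth_rate_def by (rule Limsup_mono)
  also have "\<dots> = ereal r"
    using tendsto_mult_right[OF q, of r] by (intro lim_imp_Limsup) (simp_all add: tendsto_ereal)
  finally show ?thesis .
qed

lemma sum_powers_le:
  fixes r :: real
  assumes "1 \<le> r"
  shows "(\<Sum>j\<le>m. r ^ j) \<le> (real m + 1) * r ^ m"
proof -
  have "(\<Sum>j\<le>m. r ^ j) \<le> (\<Sum>j\<le>m. r ^ m)"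
    using assms by (intro sum_mono power_increasing) simp_all
  then show ?thesis
    by (simp add: add.commute)
qed

lemma partial_sums_le_pow:
  fixes a :: "nat \<Rightarrow> nat"
  assumes "1 \<le> r" and "\<forall>\<^sub>F j in sequentially. real (a j) \<le> r ^ j"
  obtains c where "c > 0" "\<And>m. (\<Sum>j\<le>m. real (a j)) \<le> c * (real m + 1) * r ^ m"
proof -
  obtain N where N: "\<And>j. j \<ge> N \<Longrightarrow> real (a j) \<le> r ^ j"
    using assms(2) by (auto simp: eventually_sequentially)
  define A where "A = (\<Sum>j<N. real (a j))"
  have "0 \<le> A"
    by (simp add: A_def sum_nonneg)
  have "(\<Sum>j\<le>m. real (a j)) \<le> (A + 1) * (real m + 1) * r ^ m" for m
  proof -
    have "(\<Sum>j\<le>m. real (a j)) \<le> (\<Sum>j\<le>m. (if j < N then real (a j) else 0) + r ^ j)"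
      using N assms(1) by (intro sum_mono) (simp add: not_less)
    also have "\<dots> = (\<Sum>j\<in>{..m} \<inter> {..<N}. real (a j)) + (\<Sum>j\<le>m. r ^ j)"
      by (simp add: sum.distrib sum.inter_restrict)
    also have "\<dots> \<le> A + (real m + 1) * r ^ m"
      unfolding A_def by (intro add_mono sum_mono2 sum_powers_le assms(1)) auto
    also have "\<dots> \<le> (A + 1) * (real m + 1) * r ^ m"
    proof -
      have "1 * 1 \<le> (real m + 1) * r ^ m"
        using assms(1) by (intro mult_mono one_le_power) simp_all
      then show ?thesis
        using mult_left_mono[of 1 "(real m + 1) * r ^ m" A] \<open>0 \<le> A\<close> by (simp add: algebra_simps)
    qed
    finally show ?thesis .
  qed
  then show ?thesis
    using \<open>0 \<le> A\<close> by (intro that[of "A + 1"]) simp_all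
qed

lemma tendsto_root_iff_powr:
  assumes "\<And>n. 0 \<le> f n"
  shows "(\<lambda>n. root n (f n)) \<longlonglongrightarrow> L \<longleftrightarrow> (\<lambda>n. f n powr (1 / real n)) \<longlonglongrightarrow> L"
  by (rule tendsto_cong, rule eventually_mono[OF eventually_gt_at_top[of 0]])
    (simp add: root_powr_inverse assms)

lemma root_linear_tendsto_1:
  assumes "c > 0"
  shows "(\<lambda>n. root n (c * (real n + 2))) \<longlonglongrightarrow> 1"
proof -
  have "(\<lambda>n. (c * (real n + 2)) powr (1 / real n)) \<longlonglongrightarrow> 1"
    using assms by real_asymp
  then show ?thesis
    using assms by (subst tendsto_root_iff_powr) simp_all
qed

theorem growth_rate_le_of_le_partial_sums:
  fixes a b P :: "nat \<Rightarrow> nat"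
  assumes pos: "\<And>n. 1 \<le> a n" and le: "\<And>n. b n \<le> P n * (\<Sum>j\<le>Suc n. a j)"
    and P: "(\<lambda>n. root n (real (P n))) \<longlonglongrightarrow> 1"
  shows "growth_rate b \<le> growth_rate a"
proof (rule dense_ge)
  fix x assume x: "growth_rate a < x"
  show "growth_rate b \<le> x"
  proof (cases x)
    case (real r)
    have "1 < r"
      using order.strict_trans1[OF one_le_growth_rate[OF pos] x] real by simp
    obtain c where "c > 0" and c: "\<And>m. (\<Sum>j\<le>m. real (a j)) \<le> c * (real m + 1) * r ^ m"
      using partial_sums_le_pow[of r a] eventually_le_pow_of_growth_rate_less[of a r] x real \<open>1 < r\<close>
      by auto
    have bound: "real (b n) \<le> real (P n) * (c * r * (real n + 2)) * r ^ n" for n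
    proof -
      have "real (b n) \<le> real (P n) * (\<Sum>j\<le>Suc n. real (a j))"
        using le[of n] by (metis of_nat_le_iff of_nat_mult of_nat_sum)
      also have "\<dots> \<le> real (P n) * (c * (real (Suc n) + 1) * r ^ Suc n)"
        by (rule mult_left_mono[OF c]) simp
      also have "\<dots> = real (P n) * (c * r * (real n + 2)) * r ^ n"
        by (simp add: algebra_simps)
      finally show ?thesis .
    qed
    have "(\<lambda>n. root n (real (P n) * (c * r * (real n + 2)))) \<longlonglongrightarrow> 1"
      using tendsto_mult[OF P root_linear_tendsto_1[of "c * r"]] \<open>c > 0\<close> \<open>1 < r\<close>
      by (simp add: real_root_mult)
    from growth_rate_le_of_eventually_le[OF always_eventually[OF allI[OF bound]] this] \<open>1 < r\<close> real
    show ?thesis by simp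
  qed (use x in simp_all)
qed

lemma root_sphere_bound_tendsto_1:
  "(\<lambda>n. root n (real ((n + 1) ^ 3 * (2 * n + 1) ^ 2))) \<longlonglongrightarrow> 1"
proof -
  have "(\<lambda>n. ((1 + real n) ^ 3 * (1 + 2 * real n) ^ 2) powr (1 / real n)) \<longlonglongrightarrow> 1"
    by real_asymp
  then show ?thesis
    by (subst tendsto_root_iff_powr) simp_all
qed

theorem corollary5p3:
  fixes k :: nat
  assumes "k \<ge> 2"
  shows "growth_rate (conj_count k) = growth_rate (sphere_count k)"
proof (rule antisym)
  show "growth_rate (conj_count k) \<le> growth_rate (sphere_count k)"
    by (rule growth_rate_mono) (rule conj_count_le_sphere_count)
  have "\<And>n. 1 \<le> conj_count k n"
    using assms by (intro conj_count_pos) simp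
  then show "growth_rate (sphere_count k) \<le> growth_rate (conj_count k)"
    using sphere_count_le[OF assms] root_sphere_bound_tendsto_1
    by (rule growth_rate_le_of_le_partial_sums)
qed

end
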